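(* Let $M=\{u=F(z,\zeta,\bar z,\bar\zeta)\}\subset\mathbb{C}^3$ be a rigid real-analytic hypersurface through the origin whose Levi form has constant rank $1$ near $0$ (i.e. $F_{z\bar z}F_{\zeta\bar\zeta}-F_{\zeta\bar z}F_{z\bar\zeta}\equiv0$), and which is prenormalized, i.e. $F(z,\zeta,\bar z,0)=z\bar z+\frac12\zeta\bar z^2+O_{\bar z}(3)$. Let $m:=\frac{z\bar z+\frac12z^2\bar\zeta+\frac12\bar z^2\zeta}{1-\zeta\bar\zeta}$ and $G:=F-m$. Then $G=O_{z,\bar z}(3)$, i.e. every monomial $z^a\zeta^b\bar z^c\bar\zeta^d$ occurring in the Taylor expansion of $G$ at $0$ has $a+c\geq3$.
   Context: Coordinates on $\mathbb{C}^3$ are $(z,\zeta,w)$, $w=u+iv$; $F$ is real-valued. $O_{\bar z}(3)$ denotes $\bar z^3\cdot(\text{convergent power series in }(z,\zeta,\bar z,\bar\zeta))$. *)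

theory Defs
  imports "HOL-Analysis.Analysis"
begin

text \<open>Coefficients of a power series in four complex variables
  (z, zeta, w, omega); w and omega play the roles of conj z and conj zeta.\<close>
type_synonym coeffs4 = "nat \<Rightarrow> nat \<Rightarrow> nat \<Rightarrow> nat \<Rightarrow> complex"

definition mon4 :: "coeffs4 \<Rightarrow> complex \<Rightarrow> complex \<Rightarrow> complex \<Rightarrow> complex
    \<Rightarrow> nat \<times> nat \<times> nat \<times> nat \<Rightarrow> complex" where
  "mon4 c z \<zeta> w \<omega> = (\<lambda>(a,b,e,d). c a b e d * z ^ a * \<zeta> ^ b * w ^ e * \<omega> ^ d)"

definition conv_on :: "coeffs4 \<Rightarrow> real \<Rightarrow> bool" where
  "conv_on c r \<longleftrightarrow> r > 0 \<and>
     (\<forall>z \<zeta> w \<omega>. norm z < r \<and> norm \<zeta> < r \<and> norm w < r \<and> norm \<omega> < r \<longrightarrow>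
        (\<lambda>k. norm (mon4 c z \<zeta> w \<omega> k)) summable_on UNIV)"

definition pser4 :: "coeffs4 \<Rightarrow> complex \<Rightarrow> complex \<Rightarrow> complex \<Rightarrow> complex \<Rightarrow> complex" where
  "pser4 c z \<zeta> w \<omega> = infsum (mon4 c z \<zeta> w \<omega>) UNIV"

text \<open>For
  F(z,zeta) = Phi(z,zeta,conj z,conj zeta) these are the Wirtinger derivatives:
  F_{z zbar} = d1d3 Phi, F_{zeta zetabar} = d2d4 Phi, F_{zeta zbar} = d2d3 Phi,
  F_{z zetabar} = d1d4 Phi.\<close>
definition d13 :: "(complex \<Rightarrow> complex \<Rightarrow> complex \<Rightarrow> complex \<Rightarrow> complex) \<Rightarrow> complex \<Rightarrow> complex \<Rightarrow> complex" where
  "d13 \<Phi> z \<zeta> = deriv (\<lambda>s. deriv (\<lambda>t. \<Phi> t \<zeta> s (cnj \<zeta>)) z) (cnj z)"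
definition d24 :: "(complex \<Rightarrow> complex \<Rightarrow> complex \<Rightarrow> complex \<Rightarrow> complex) \<Rightarrow> complex \<Rightarrow> complex \<Rightarrow> complex" where
  "d24 \<Phi> z \<zeta> = deriv (\<lambda>s. deriv (\<lambda>t. \<Phi> z t (cnj z) s) \<zeta>) (cnj \<zeta>)"
definition d23 :: "(complex \<Rightarrow> complex \<Rightarrow> complex \<Rightarrow> complex \<Rightarrow> complex) \<Rightarrow> complex \<Rightarrow> complex \<Rightarrow> complex" where
  "d23 \<Phi> z \<zeta> = deriv (\<lambda>s. deriv (\<lambda>t. \<Phi> z t s (cnj \<zeta>)) \<zeta>) (cnj z)"
definition d14 :: "(complex \<Rightarrow> complex \<Rightarrow> complex \<Rightarrow> complex \<Rightarrow> complex) \<Rightarrow> complex \<Rightarrow> complex \<Rightarrow> complex" where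
  "d14 \<Phi> z \<zeta> = deriv (\<lambda>s. deriv (\<lambda>t. \<Phi> t \<zeta> (cnj z) s) z) (cnj \<zeta>)"

definition mfun :: "complex \<Rightarrow> complex \<Rightarrow> complex" where
  "mfun z \<zeta> = (z * cnj z + z^2 * cnj \<zeta> / 2 + (cnj z)^2 * \<zeta> / 2) / (1 - \<zeta> * cnj \<zeta>)"

end

theory Submission
  imports Defs "HOL-Complex_Analysis.Complex_Analysis"
begin

text \<open>
  The Levi determinant \<open>d13 * d24 - d23 * d14\<close> of the polarized series \<open>pser4 f\<close> is again such
  a series (termwise differentiation and Cauchy products), and a series vanishing on the totally
  real subspace \<open>w = cnj z, \<omega> = cnj \<zeta>\<close> has zero coefficients. So all coefficients
  \<open>levi_coeffs f\<close> of the determinant vanish, and so do those of the model \<open>m\<close>, whose Levi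
  determinant vanishes identically. Because of the prenormalization (\<open>f 1 0 1 0 = 1\<close>,
  \<open>f 0 1 1 0 = 0\<close>), the coefficient of \<open>z\<^sup>a \<zeta>\<^sup>b w\<^sup>e \<omega>\<^sup>d\<close> of the determinant is
  \<open>(d+1) (b+1) f a (b+1) e (d+1)\<close> plus products of coefficients of lower order. Hence the
  coefficients with \<open>a + e \<le> 2\<close> are determined, by induction on \<open>d\<close> and then on \<open>a + e\<close> and \<open>e\<close>,
  by those with \<open>d = 0\<close> (prenormalization) and \<open>b = 0\<close> (reality: \<open>f a b e d = cnj (f e d a b)\<close>).
  The model satisfies the same normalization, so \<open>F\<close> and \<open>m\<close> share all these coefficients.
\<close>

type_synonym idx4 = "nat \<times> nat \<times> nat \<times> nat"

definition in_polydisc :: "real \<Rightarrow> complex \<Rightarrow> complex \<Rightarrow> complex \<Rightarrow> complex \<Rightarrow> bool" where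
  "in_polydisc r z \<zeta> w \<omega> \<longleftrightarrow> norm z < r \<and> norm \<zeta> < r \<and> norm w < r \<and> norm \<omega> < r"

lemma conv_on_pos: "conv_on c r \<Longrightarrow> 0 < r"
  by (simp add: conv_on_def)

lemma conv_onD: "conv_on c r \<Longrightarrow> in_polydisc r z \<zeta> w \<omega> \<Longrightarrow> (\<lambda>k. norm (mon4 c z \<zeta> w \<omega> k)) summable_on UNIV"
  by (simp add: conv_on_def in_polydisc_def)

lemma conv_onI:
  "0 < r \<Longrightarrow> (\<And>z \<zeta> w \<omega>. in_polydisc r z \<zeta> w \<omega> \<Longrightarrow> (\<lambda>k. norm (mon4 c z \<zeta> w \<omega> k)) summable_on UNIV)
    \<Longrightarrow> conv_on c r"
  by (simp add: conv_on_def in_polydisc_def)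

lemma conv_on_mono: "conv_on c r \<Longrightarrow> 0 < \<rho> \<Longrightarrow> \<rho> \<le> r \<Longrightarrow> conv_on c \<rho>"
  unfolding conv_on_def by auto

lemma norm_mon4:
  "norm (mon4 c z \<zeta> w \<omega> (a,b,e,d)) = norm (c a b e d) * norm z ^ a * norm \<zeta> ^ b * norm w ^ e * norm \<omega> ^ d"
  by (simp add: mon4_def norm_mult norm_power)

subsection \<open>Termwise differentiation\<close>

definition diffs1 :: "coeffs4 \<Rightarrow> coeffs4" where
  "diffs1 c = (\<lambda>a b e d. of_nat (Suc a) * c (Suc a) b e d)"
definition diffs2 :: "coeffs4 \<Rightarrow> coeffs4" where
  "diffs2 c = (\<lambda>a b e d. of_nat (Suc b) * c a (Suc b) e d)"
definition diffs3 :: "coeffs4 \<Rightarrow> coeffs4" where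
  "diffs3 c = (\<lambda>a b e d. of_nat (Suc e) * c a b (Suc e) d)"
definition diffs4 :: "coeffs4 \<Rightarrow> coeffs4" where
  "diffs4 c = (\<lambda>a b e d. of_nat (Suc d) * c a b e (Suc d))"

definition swap12 :: "coeffs4 \<Rightarrow> coeffs4" where "swap12 c = (\<lambda>a b e d. c b a e d)"
definition swap13 :: "coeffs4 \<Rightarrow> coeffs4" where "swap13 c = (\<lambda>a b e d. c e b a d)"
definition swap14 :: "coeffs4 \<Rightarrow> coeffs4" where "swap14 c = (\<lambda>a b e d. c d b e a)"

lemma diffs2_swap12: "diffs2 c = swap12 (diffs1 (swap12 c))"
  by (simp add: diffs1_def diffs2_def swap12_def)
lemma diffs3_swap13: "diffs3 c = swap13 (diffs1 (swap13 c))"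
  by (simp add: diffs1_def diffs3_def swap13_def)
lemma diffs4_swap14: "diffs4 c = swap14 (diffs1 (swap14 c))"
  by (simp add: diffs1_def diffs4_def swap14_def)

lemma pser4_reindex_involution:
  fixes \<sigma> :: "idx4 \<Rightarrow> idx4"
  assumes inv: "\<And>k. \<sigma> (\<sigma> k) = k"
    and eq: "\<And>k. mon4 c' z' \<zeta>' w' \<omega>' k = mon4 c z \<zeta> w \<omega> (\<sigma> k)"
  shows "pser4 c' z' \<zeta>' w' \<omega>' = pser4 c z \<zeta> w \<omega>"
    and "(\<lambda>k. norm (mon4 c' z' \<zeta>' w' \<omega>' k)) summable_on UNIV \<longleftrightarrow>
         (\<lambda>k. norm (mon4 c z \<zeta> w \<omega> k)) summable_on UNIV"
  unfolding pser4_def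
  by (rule infsum_reindex_bij_witness[of UNIV \<sigma> \<sigma>]; simp add: inv eq)
     (rule summable_on_reindex_bij_witness[of UNIV \<sigma> \<sigma>]; simp add: inv eq)

lemma
  shows pser4_swap12: "pser4 (swap12 c) \<zeta> z w \<omega> = pser4 c z \<zeta> w \<omega>"
    and summable_swap12: "(\<lambda>k. norm (mon4 (swap12 c) \<zeta> z w \<omega> k)) summable_on UNIV \<longleftrightarrow>
      (\<lambda>k. norm (mon4 c z \<zeta> w \<omega> k)) summable_on UNIV"
  by (rule pser4_reindex_involution[where \<sigma>="\<lambda>(a,b,e,d). (b,a,e,d)"];
      auto simp: mon4_def swap12_def mult_ac)+

lemma
  shows pser4_swap13: "pser4 (swap13 c) w \<zeta> z \<omega> = pser4 c z \<zeta> w \<omega>"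
    and summable_swap13: "(\<lambda>k. norm (mon4 (swap13 c) w \<zeta> z \<omega> k)) summable_on UNIV \<longleftrightarrow>
      (\<lambda>k. norm (mon4 c z \<zeta> w \<omega> k)) summable_on UNIV"
  by (rule pser4_reindex_involution[where \<sigma>="\<lambda>(a,b,e,d). (e,b,a,d)"];
      auto simp: mon4_def swap13_def mult_ac)+

lemma
  shows pser4_swap14: "pser4 (swap14 c) \<omega> \<zeta> w z = pser4 c z \<zeta> w \<omega>"
    and summable_swap14: "(\<lambda>k. norm (mon4 (swap14 c) \<omega> \<zeta> w z k)) summable_on UNIV \<longleftrightarrow>
      (\<lambda>k. norm (mon4 c z \<zeta> w \<omega> k)) summable_on UNIV"
  by (rule pser4_reindex_involution[where \<sigma>="\<lambda>(a,b,e,d). (d,b,e,a)"];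
      auto simp: mon4_def swap14_def mult_ac)+

lemma conv_on_swap12:
  assumes "conv_on c r"
  shows "conv_on (swap12 c) r"
proof (rule conv_onI)
  fix z \<zeta> w \<omega>
  assume "in_polydisc r z \<zeta> w \<omega>"
  then have "in_polydisc r \<zeta> z w \<omega>"
    by (auto simp: in_polydisc_def)
  then show "(\<lambda>k. norm (mon4 (swap12 c) z \<zeta> w \<omega> k)) summable_on UNIV"
    using summable_swap12[of c z \<zeta> w \<omega>] conv_onD[OF assms] by simp
qed (rule conv_on_pos[OF assms])

lemma conv_on_swap13:
  assumes "conv_on c r"
  shows "conv_on (swap13 c) r"
proof (rule conv_onI)
  fix z \<zeta> w \<omega>
  assume "in_polydisc r z \<zeta> w \<omega>"
  then have "in_polydisc r w \<zeta> z \<omega>"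
    by (auto simp: in_polydisc_def)
  then show "(\<lambda>k. norm (mon4 (swap13 c) z \<zeta> w \<omega> k)) summable_on UNIV"
    using summable_swap13[of c z \<zeta> w \<omega>] conv_onD[OF assms] by simp
qed (rule conv_on_pos[OF assms])

lemma conv_on_swap14:
  assumes "conv_on c r"
  shows "conv_on (swap14 c) r"
proof (rule conv_onI)
  fix z \<zeta> w \<omega>
  assume "in_polydisc r z \<zeta> w \<omega>"
  then have "in_polydisc r \<omega> \<zeta> w z"
    by (auto simp: in_polydisc_def)
  then show "(\<lambda>k. norm (mon4 (swap14 c) z \<zeta> w \<omega> k)) summable_on UNIV"
    using summable_swap14[of c z \<zeta> w \<omega>] conv_onD[OF assms] by simp
qed (rule conv_on_pos[OF assms])

definition zcoeff :: "coeffs4 \<Rightarrow> complex \<Rightarrow> complex \<Rightarrow> complex \<Rightarrow> nat \<Rightarrow> complex" where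
  "zcoeff c \<zeta> w \<omega> a = infsum (\<lambda>(b,e,d). c a b e d * \<zeta>^b * w^e * \<omega>^d) UNIV"

lemma sums_zcoeff:
  assumes "(\<lambda>k. norm (mon4 c z \<zeta> w \<omega> k)) summable_on UNIV"
  shows "(\<lambda>a. zcoeff c \<zeta> w \<omega> a * z^a) sums pser4 c z \<zeta> w \<omega>"
proof -
  let ?f = "mon4 c z \<zeta> w \<omega>"
  have abs: "(\<lambda>k. norm (?f k)) summable_on Sigma UNIV (\<lambda>_. UNIV)"
    using assms by simp
  then have "(?f has_sum pser4 c z \<zeta> w \<omega>) (Sigma UNIV (\<lambda>_. UNIV))"
    unfolding pser4_def by (simp add: abs_summable_summable has_sum_infsum)
  moreover have "((\<lambda>t. ?f (a,t)) has_sum (zcoeff c \<zeta> w \<omega> a * z^a)) UNIV" for a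
  proof -
    have "(\<lambda>t. norm (?f (a,t))) summable_on UNIV"
      using Infinite_Sum.abs_summable_on_Sigma_iff[of ?f UNIV "\<lambda>_. UNIV"] abs by blast
    then have "((\<lambda>t. ?f (a,t)) has_sum infsum (\<lambda>t. ?f (a,t)) UNIV) UNIV"
      by (simp add: abs_summable_summable has_sum_infsum)
    moreover have "(\<lambda>t. ?f (a,t)) = (\<lambda>t. (\<lambda>(b,e,d). c a b e d * \<zeta>^b * w^e * \<omega>^d) t * z^a)"
      by (auto simp: mon4_def mult_ac)
    ultimately show ?thesis
      unfolding zcoeff_def by (simp add: infsum_cmult_left')
  qed
  ultimately have "((\<lambda>a. zcoeff c \<zeta> w \<omega> a * z^a) has_sum pser4 c z \<zeta> w \<omega>) UNIV"
    by (rule has_sum_Sigma')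
  then show ?thesis
    by (rule has_sum_imp_sums)
qed

lemma diffs_zcoeff: "diffs (zcoeff c \<zeta> w \<omega>) = zcoeff (diffs1 c) \<zeta> w \<omega>"
proof
  fix a
  have "zcoeff (diffs1 c) \<zeta> w \<omega> a =
      infsum (\<lambda>x. of_nat (Suc a) * (\<lambda>(b,e,d). c (Suc a) b e d * \<zeta>^b * w^e * \<omega>^d) x) UNIV"
    unfolding zcoeff_def diffs1_def by (intro infsum_cong) (auto simp: mult_ac)
  then show "diffs (zcoeff c \<zeta> w \<omega>) a = zcoeff (diffs1 c) \<zeta> w \<omega> a"
    by (simp add: diffs_def zcoeff_def infsum_cmult_right')
qed

lemma Suc_mult_power_le:
  fixes x K :: real
  assumes "0 \<le> x" "x < K"
  obtains B where "\<And>n. real (Suc n) * x^n \<le> B * K^n"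
proof -
  define q where "q = x / K"
  have q: "0 \<le> q" "q < 1" "x = q * K"
    using assms by (auto simp: q_def)
  have "(\<lambda>n. of_nat n * q^n + q^n) \<longlonglongrightarrow> 0 + 0"
    using q by (intro tendsto_add powser_times_n_limit_0 LIMSEQ_power_zero) auto
  then have "(\<lambda>n. real (Suc n) * q^n) \<longlonglongrightarrow> 0"
    by (simp add: algebra_simps)
  then have "Bseq (\<lambda>n. real (Suc n) * q^n)"
    by (rule convergent_imp_Bseq[OF convergentI])
  then obtain B where B: "\<And>n. norm (real (Suc n) * q^n) \<le> B"
    using BseqE by blast
  have "real (Suc n) * x^n \<le> B * K^n" for n
    using mult_right_mono[OF B[of n], of "K^n"] assms q by (simp add: power_mult_distrib mult_ac)
  then show ?thesis
    using that by blast
qed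

lemma conv_on_diffs1:
  assumes cv: "conv_on c r"
  shows "conv_on (diffs1 c) r"
proof (rule conv_onI)
  show "0 < r"
    using cv conv_on_pos by blast
  fix z \<zeta> w \<omega> :: complex
  assume p: "in_polydisc r z \<zeta> w \<omega>"
  define K where "K = (norm z + r) / 2"
  have K: "norm z < K" "K < r"
    using p by (auto simp: K_def in_polydisc_def)
  then have "0 < K"
    using norm_ge_zero[of z] by linarith
  obtain B where B: "\<And>n. real (Suc n) * norm z ^ n \<le> B * K^n"
    using Suc_mult_power_le[OF norm_ge_zero K(1)] by blast
  let ?g = "\<lambda>k. norm (mon4 c (of_real K) \<zeta> w \<omega> k)"
  let ?h = "\<lambda>(a::nat,b::nat,e::nat,d::nat). (Suc a,b,e,d)"
  have "?g summable_on UNIV"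
    using conv_onD[OF cv] p K \<open>0 < K\<close> by (auto simp: in_polydisc_def)
  then have "?g summable_on range ?h"
    using summable_on_subset_banach by blast
  then have "(?g \<circ> ?h) summable_on UNIV"
    using summable_on_reindex[of ?h UNIV] by (auto simp: inj_on_def)
  then have "(\<lambda>k. (B / K) * (?g \<circ> ?h) k) summable_on UNIV"
    by (rule summable_on_cmult_right)
  then show "(\<lambda>k. norm (mon4 (diffs1 c) z \<zeta> w \<omega> k)) summable_on UNIV"
  proof (rule summable_on_comparison_test)
    fix k :: idx4
    obtain a b e d where k: "k = (a,b,e,d)"
      by (cases k) auto
    let ?R = "norm (c (Suc a) b e d) * norm \<zeta> ^ b * norm w ^ e * norm \<omega> ^ d"
    have "norm (mon4 (diffs1 c) z \<zeta> w \<omega> k) = (real (Suc a) * norm z ^ a) * ?R"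
      by (simp add: k norm_mon4 diffs1_def norm_mult mult_ac del: of_nat_Suc)
    also have "\<dots> \<le> (B * K^a) * ?R"
      using B[of a] by (rule mult_right_mono) auto
    also have "\<dots> = (B / K) * (?g \<circ> ?h) k"
      using \<open>0 < K\<close> by (simp add: k norm_mon4 mult_ac)
    finally show "norm (mon4 (diffs1 c) z \<zeta> w \<omega> k) \<le> (B / K) * (?g \<circ> ?h) k" .
  qed auto
qed

lemma conv_on_diffs2: "conv_on c r \<Longrightarrow> conv_on (diffs2 c) r"
  by (simp add: diffs2_swap12 conv_on_swap12 conv_on_diffs1)
lemma conv_on_diffs3: "conv_on c r \<Longrightarrow> conv_on (diffs3 c) r"
  by (simp add: diffs3_swap13 conv_on_swap13 conv_on_diffs1)
lemma conv_on_diffs4: "conv_on c r \<Longrightarrow> conv_on (diffs4 c) r"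
  by (simp add: diffs4_swap14 conv_on_swap14 conv_on_diffs1)

lemma pser4_has_field_derivative1:
  assumes cv: "conv_on c r" and p: "in_polydisc r z \<zeta> w \<omega>"
  shows "((\<lambda>t. pser4 c t \<zeta> w \<omega>) has_field_derivative pser4 (diffs1 c) z \<zeta> w \<omega>) (at z)"
proof -
  have sums: "(\<lambda>a. zcoeff c' \<zeta> w \<omega> a * x^a) sums pser4 c' x \<zeta> w \<omega>"
    if "conv_on c' r" "norm x < r" for c' x
    by (rule sums_zcoeff, rule conv_onD[OF that(1)]) (use p that(2) in \<open>simp add: in_polydisc_def\<close>)
  define K where "K = (norm z + r) / 2"
  have K: "norm z < K" "K < r"
    using p unfolding K_def in_polydisc_def by auto
  have "0 < K"
    using K(1) norm_ge_zero[of z] by linarith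
  then have "norm (of_real K :: complex) < r"
    using K(2) by simp
  then have "summable (\<lambda>a. zcoeff c \<zeta> w \<omega> a * (of_real K)^a)"
    using sums[OF cv, of "of_real K"] by (simp add: sums_iff)
  then have D: "((\<lambda>x. \<Sum>a. zcoeff c \<zeta> w \<omega> a * x^a) has_field_derivative
          (\<Sum>a. diffs (zcoeff c \<zeta> w \<omega>) a * z^a)) (at z)"
    by (rule termdiffs_strong) (use K in simp)
  have D_eq: "(\<Sum>a. diffs (zcoeff c \<zeta> w \<omega>) a * z^a) = pser4 (diffs1 c) z \<zeta> w \<omega>"
    using sums[OF conv_on_diffs1[OF cv], of z] p
    by (simp add: diffs_zcoeff sums_iff in_polydisc_def)
  have "(\<Sum>a. zcoeff c \<zeta> w \<omega> a * x^a) = pser4 c x \<zeta> w \<omega>" if "x \<in> ball 0 r" for x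
    using sums[OF cv, of x] that by (simp add: sums_iff)
  then show ?thesis
    using p by (intro has_field_derivative_transform_within_open[OF D[unfolded D_eq], of "ball 0 r"])
      (auto simp: in_polydisc_def)
qed

lemma pser4_has_field_derivative2:
  assumes "conv_on c r" and "in_polydisc r z \<zeta> w \<omega>"
  shows "((\<lambda>t. pser4 c z t w \<omega>) has_field_derivative pser4 (diffs2 c) z \<zeta> w \<omega>) (at \<zeta>)"
proof -
  have "in_polydisc r \<zeta> z w \<omega>"
    using assms(2) by (auto simp: in_polydisc_def)
  from pser4_has_field_derivative1[OF conv_on_swap12[OF assms(1)] this]
  show ?thesis
    by (simp add: pser4_swap12 diffs2_swap12)
qed

lemma pser4_has_field_derivative3:
  assumes "conv_on c r" and "in_polydisc r z \<zeta> w \<omega>"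
  shows "((\<lambda>t. pser4 c z \<zeta> t \<omega>) has_field_derivative pser4 (diffs3 c) z \<zeta> w \<omega>) (at w)"
proof -
  have "in_polydisc r w \<zeta> z \<omega>"
    using assms(2) by (auto simp: in_polydisc_def)
  from pser4_has_field_derivative1[OF conv_on_swap13[OF assms(1)] this]
  show ?thesis
    by (simp add: pser4_swap13 diffs3_swap13)
qed

lemma pser4_has_field_derivative4:
  assumes "conv_on c r" and "in_polydisc r z \<zeta> w \<omega>"
  shows "((\<lambda>t. pser4 c z \<zeta> w t) has_field_derivative pser4 (diffs4 c) z \<zeta> w \<omega>) (at \<omega>)"
proof -
  have "in_polydisc r \<omega> \<zeta> w z"
    using assms(2) by (auto simp: in_polydisc_def)
  from pser4_has_field_derivative1[OF conv_on_swap14[OF assms(1)] this]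
  show ?thesis
    by (simp add: pser4_swap14 diffs4_swap14)
qed

lemma has_field_derivative_unique_on_ball:
  assumes "(f has_field_derivative D) (at x)" and "(g has_field_derivative E) (at x)"
    and "norm x < r" and "\<And>y. norm y < r \<Longrightarrow> f y = g y"
  shows "D = E"
proof -
  have "(g has_field_derivative D) (at x)"
    by (rule has_field_derivative_transform_within_open[OF assms(1), of "ball 0 r"]) (use assms(3,4) in auto)
  then show ?thesis
    using assms(2) DERIV_unique by blast
qed

context
  fixes c :: coeffs4 and r :: real and z \<zeta> w \<omega> :: complex
  assumes c: "conv_on c r" and p: "in_polydisc r z \<zeta> w \<omega>"
begin

lemma pser4_diffs1_eqI:
  assumes "\<And>t. norm t < r \<Longrightarrow> pser4 c t \<zeta> w \<omega> = g t" and "(g has_field_derivative D) (at z)"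
  shows "pser4 (diffs1 c) z \<zeta> w \<omega> = D"
  using p by (intro has_field_derivative_unique_on_ball[OF pser4_has_field_derivative1[OF c p] assms(2) _ assms(1)])
    (auto simp: in_polydisc_def)

lemma pser4_diffs2_eqI:
  assumes "\<And>t. norm t < r \<Longrightarrow> pser4 c z t w \<omega> = g t" and "(g has_field_derivative D) (at \<zeta>)"
  shows "pser4 (diffs2 c) z \<zeta> w \<omega> = D"
  using p by (intro has_field_derivative_unique_on_ball[OF pser4_has_field_derivative2[OF c p] assms(2) _ assms(1)])
    (auto simp: in_polydisc_def)

lemma pser4_diffs3_eqI:
  assumes "\<And>t. norm t < r \<Longrightarrow> pser4 c z \<zeta> t \<omega> = g t" and "(g has_field_derivative D) (at w)"
  shows "pser4 (diffs3 c) z \<zeta> w \<omega> = D"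
  using p by (intro has_field_derivative_unique_on_ball[OF pser4_has_field_derivative3[OF c p] assms(2) _ assms(1)])
    (auto simp: in_polydisc_def)

lemma pser4_diffs4_eqI:
  assumes "\<And>t. norm t < r \<Longrightarrow> pser4 c z \<zeta> w t = g t" and "(g has_field_derivative D) (at \<omega>)"
  shows "pser4 (diffs4 c) z \<zeta> w \<omega> = D"
  using p by (intro has_field_derivative_unique_on_ball[OF pser4_has_field_derivative4[OF c p] assms(2) _ assms(1)])
    (auto simp: in_polydisc_def)

end

lemma deriv_deriv_eq:
  fixes \<Phi> :: "complex \<Rightarrow> complex \<Rightarrow> complex"
  assumes inner: "\<And>s. norm s < r \<Longrightarrow> ((\<lambda>t. \<Phi> t s) has_field_derivative \<phi> s) (at x)"
    and outer: "(\<phi> has_field_derivative D) (at y)" and y: "norm y < r"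
  shows "deriv (\<lambda>s. deriv (\<lambda>t. \<Phi> t s) x) y = D"
proof -
  have "deriv (\<lambda>t. \<Phi> t s) x = \<phi> s" if "s \<in> ball 0 r" for s
    using inner[of s] that by (simp add: DERIV_imp_deriv)
  then have "((\<lambda>s. deriv (\<lambda>t. \<Phi> t s) x) has_field_derivative D) (at y)"
    using y by (intro has_field_derivative_transform_within_open[OF outer, of "ball 0 r"]) auto
  then show ?thesis
    by (rule DERIV_imp_deriv)
qed

context
  fixes f :: coeffs4 and r :: real and z \<zeta> :: complex
  assumes f: "conv_on f r" and z: "norm z < r" and \<zeta>: "norm \<zeta> < r"
begin

lemma d13_pser4: "d13 (pser4 f) z \<zeta> = pser4 (diffs3 (diffs1 f)) z \<zeta> (cnj z) (cnj \<zeta>)"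
  unfolding d13_def
  by (rule deriv_deriv_eq[where r=r and \<phi>="\<lambda>s. pser4 (diffs1 f) z \<zeta> s (cnj \<zeta>)"])
     (use z \<zeta> in \<open>auto intro!: pser4_has_field_derivative1[OF f]
        pser4_has_field_derivative3[OF conv_on_diffs1[OF f]] simp: in_polydisc_def\<close>)

lemma d24_pser4: "d24 (pser4 f) z \<zeta> = pser4 (diffs4 (diffs2 f)) z \<zeta> (cnj z) (cnj \<zeta>)"
  unfolding d24_def
  by (rule deriv_deriv_eq[where r=r and \<phi>="\<lambda>s. pser4 (diffs2 f) z \<zeta> (cnj z) s"])
     (use z \<zeta> in \<open>auto intro!: pser4_has_field_derivative2[OF f]
        pser4_has_field_derivative4[OF conv_on_diffs2[OF f]] simp: in_polydisc_def\<close>)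

lemma d23_pser4: "d23 (pser4 f) z \<zeta> = pser4 (diffs3 (diffs2 f)) z \<zeta> (cnj z) (cnj \<zeta>)"
  unfolding d23_def
  by (rule deriv_deriv_eq[where r=r and \<phi>="\<lambda>s. pser4 (diffs2 f) z \<zeta> s (cnj \<zeta>)"])
     (use z \<zeta> in \<open>auto intro!: pser4_has_field_derivative2[OF f]
        pser4_has_field_derivative3[OF conv_on_diffs2[OF f]] simp: in_polydisc_def\<close>)

lemma d14_pser4: "d14 (pser4 f) z \<zeta> = pser4 (diffs4 (diffs1 f)) z \<zeta> (cnj z) (cnj \<zeta>)"
  unfolding d14_def
  by (rule deriv_deriv_eq[where r=r and \<phi>="\<lambda>s. pser4 (diffs1 f) z \<zeta> (cnj z) s"])
     (use z \<zeta> in \<open>auto intro!: pser4_has_field_derivative1[OF f]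
        pser4_has_field_derivative4[OF conv_on_diffs1[OF f]] simp: in_polydisc_def\<close>)

end

lemma abs_summable_has_sum_product:
  fixes p :: "'i \<Rightarrow> 'a::{real_normed_field,banach}" and q :: "'j \<Rightarrow> 'a"
  assumes p: "(\<lambda>k. norm (p k)) summable_on UNIV" and q: "(\<lambda>k. norm (q k)) summable_on UNIV"
  shows "((\<lambda>(i,j). p i * q j) has_sum (infsum p UNIV * infsum q UNIV)) UNIV"
proof -
  let ?P = "\<lambda>(i,j). p i * q j"
  have "(\<lambda>j. norm (?P (i, j))) summable_on UNIV" for i
    using summable_on_cmult_right[OF q] by (simp add: norm_mult)
  moreover have "(\<lambda>i. norm (infsum (\<lambda>j. norm (?P (i, j))) UNIV)) summable_on UNIV"
    using summable_on_cmult_left[OF p] by (simp add: norm_mult infsum_cmult_right' infsum_nonneg)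
  ultimately have "(\<lambda>k. norm (?P k)) summable_on Sigma UNIV (\<lambda>_. UNIV)"
    using Infinite_Sum.abs_summable_on_Sigma_iff[of ?P UNIV "\<lambda>_. UNIV"] by blast
  then have sm: "?P summable_on Sigma UNIV (\<lambda>_. UNIV)"
    by (rule abs_summable_summable)
  have "infsum ?P (Sigma UNIV (\<lambda>_. UNIV)) = infsum (\<lambda>i. infsum (\<lambda>j. p i * q j) UNIV) UNIV"
    using infsum_Sigma_banach[OF sm] by simp
  also have "\<dots> = infsum p UNIV * infsum q UNIV"
    by (simp add: infsum_cmult_right' infsum_cmult_left')
  finally show ?thesis
    using has_sum_infsum[OF sm] by simp
qed

definition box4 :: "idx4 \<Rightarrow> idx4 set" where
  "box4 = (\<lambda>(a,b,e,d). {..a} \<times> {..b} \<times> {..e} \<times> {..d})"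
definition sub4 :: "idx4 \<Rightarrow> idx4 \<Rightarrow> idx4" where
  "sub4 = (\<lambda>(a,b,e,d) (a',b',e',d'). (a-a',b-b',e-e',d-d'))"

lemma finite_box4 [simp]: "finite (box4 k)"
  by (cases k) (auto simp: box4_def)

lemma has_sum_cauchy_product4:
  fixes p q :: "idx4 \<Rightarrow> 'a::{real_normed_field,banach}"
  assumes p: "(\<lambda>k. norm (p k)) summable_on UNIV" and q: "(\<lambda>k. norm (q k)) summable_on UNIV"
  shows "((\<lambda>k. \<Sum>j\<in>box4 k. p j * q (sub4 k j)) has_sum (infsum p UNIV * infsum q UNIV)) UNIV"
proof -
  let ?add4 = "\<lambda>(a,b,e,d) (a',b',e',d'). (a+a',b+b',e+e',d+d') :: idx4"
  have "((\<lambda>(k,j). p j * q (sub4 k j)) has_sum (infsum p UNIV * infsum q UNIV)) (Sigma UNIV box4)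
     \<longleftrightarrow> ((\<lambda>(i,j). p i * q j) has_sum (infsum p UNIV * infsum q UNIV)) UNIV"
    by (rule has_sum_reindex_bij_witness[where i="\<lambda>(i,j). (?add4 i j, i)" and j="\<lambda>(k,j). (j, sub4 k j)"])
       (auto simp: box4_def sub4_def)
  then have "((\<lambda>(k,j). p j * q (sub4 k j)) has_sum (infsum p UNIV * infsum q UNIV)) (Sigma UNIV box4)"
    using abs_summable_has_sum_product[OF p q] by simp
  then show ?thesis
    by (rule has_sum_SigmaD) (auto intro!: has_sum_finiteI)
qed

definition cauchy4 :: "coeffs4 \<Rightarrow> coeffs4 \<Rightarrow> coeffs4" where
  "cauchy4 c d = (\<lambda>a b e k. \<Sum>(a',b',e',k')\<in>box4 (a,b,e,k). c a' b' e' k' * d (a-a') (b-b') (e-e') (k-k'))"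

lemma mon4_cauchy4:
  "mon4 (cauchy4 c d) z \<zeta> w \<omega> k = (\<Sum>j\<in>box4 k. mon4 c z \<zeta> w \<omega> j * mon4 d z \<zeta> w \<omega> (sub4 k j))"
proof -
  obtain a b e l where k: "k = (a,b,e,l)"
    by (cases k) auto
  have "mon4 c z \<zeta> w \<omega> j * mon4 d z \<zeta> w \<omega> (sub4 k j) =
      (case j of (a',b',e',l') \<Rightarrow> c a' b' e' l' * d (a-a') (b-b') (e-e') (l-l')) * z^a * \<zeta>^b * w^e * \<omega>^l"
    if "j \<in> box4 k" for j
  proof -
    obtain a' b' e' l' where j: "j = (a',b',e',l')" and le: "a' \<le> a" "b' \<le> b" "e' \<le> e" "l' \<le> l"
      using \<open>j \<in> box4 k\<close> by (cases j) (auto simp: k box4_def)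
    from le have "z^a = z^a' * z^(a-a')" "\<zeta>^b = \<zeta>^b' * \<zeta>^(b-b')" "w^e = w^e' * w^(e-e')"
        "\<omega>^l = \<omega>^l' * \<omega>^(l-l')"
      by (simp_all flip: power_add)
    then show ?thesis
      by (simp add: j k mon4_def sub4_def mult_ac)
  qed
  then show ?thesis
    by (simp add: k mon4_def cauchy4_def sum_distrib_right cong: sum.cong)
qed

lemma
  assumes c: "conv_on c r" and d: "conv_on d r" and p: "in_polydisc r z \<zeta> w \<omega>"
  shows pser4_cauchy4: "pser4 (cauchy4 c d) z \<zeta> w \<omega> = pser4 c z \<zeta> w \<omega> * pser4 d z \<zeta> w \<omega>"
    and summable_mon4_cauchy4: "(\<lambda>k. norm (mon4 (cauchy4 c d) z \<zeta> w \<omega> k)) summable_on UNIV"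
proof -
  have sc: "(\<lambda>k. norm (mon4 c z \<zeta> w \<omega> k)) summable_on UNIV"
    using conv_onD[OF c p] .
  have sd: "(\<lambda>k. norm (mon4 d z \<zeta> w \<omega> k)) summable_on UNIV"
    using conv_onD[OF d p] .
  show "pser4 (cauchy4 c d) z \<zeta> w \<omega> = pser4 c z \<zeta> w \<omega> * pser4 d z \<zeta> w \<omega>"
    unfolding pser4_def mon4_cauchy4 by (rule infsumI has_sum_cauchy_product4 sc sd)+
  have "(\<lambda>k. \<Sum>j\<in>box4 k. norm (mon4 c z \<zeta> w \<omega> j) * norm (mon4 d z \<zeta> w \<omega> (sub4 k j))) summable_on UNIV"
    using has_sum_cauchy_product4[of "\<lambda>k. norm (mon4 c z \<zeta> w \<omega> k)" "\<lambda>k. norm (mon4 d z \<zeta> w \<omega> k)"] sc sd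
    by (auto dest: has_sum_imp_summable)
  then show "(\<lambda>k. norm (mon4 (cauchy4 c d) z \<zeta> w \<omega> k)) summable_on UNIV"
    by (rule summable_on_comparison_test)
       (auto simp: mon4_cauchy4 norm_mult intro!: order.trans[OF norm_sum])
qed

lemma conv_on_cauchy4:
  assumes "conv_on c r" and "conv_on d r"
  shows "conv_on (cauchy4 c d) r"
  using summable_mon4_cauchy4[OF assms] conv_on_pos[OF assms(1)] by (blast intro: conv_onI)

lemma mon4_diff: "mon4 (c - d) z \<zeta> w \<omega> = (\<lambda>k. mon4 c z \<zeta> w \<omega> k - mon4 d z \<zeta> w \<omega> k)"
  by (auto simp: mon4_def algebra_simps)

lemma pser4_diff:
  assumes "conv_on c r" and "conv_on d r" and "in_polydisc r z \<zeta> w \<omega>"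
  shows "pser4 (c - d) z \<zeta> w \<omega> = pser4 c z \<zeta> w \<omega> - pser4 d z \<zeta> w \<omega>"
proof -
  have "mon4 c z \<zeta> w \<omega> summable_on UNIV" "mon4 d z \<zeta> w \<omega> summable_on UNIV"
    using assms by (auto intro: abs_summable_summable conv_onD)
  then have "((\<lambda>k. mon4 c z \<zeta> w \<omega> k + - mon4 d z \<zeta> w \<omega> k) has_sum
      (pser4 c z \<zeta> w \<omega> + - pser4 d z \<zeta> w \<omega>)) UNIV"
    unfolding pser4_def by (intro has_sum_add has_sum_uminusI has_sum_infsum)
  then show ?thesis
    by (simp add: pser4_def mon4_diff infsumI)
qed

lemma conv_on_diff:
  assumes c: "conv_on c r" and d: "conv_on d r"
  shows "conv_on (c - d) r"
proof (rule conv_onI)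
  fix z \<zeta> w \<omega> assume p: "in_polydisc r z \<zeta> w \<omega>"
  have "(\<lambda>k. norm (mon4 c z \<zeta> w \<omega> k) + norm (mon4 d z \<zeta> w \<omega> k)) summable_on UNIV"
    by (rule summable_on_add[OF conv_onD[OF c p] conv_onD[OF d p]])
  then show "(\<lambda>k. norm (mon4 (c - d) z \<zeta> w \<omega> k)) summable_on UNIV"
    by (rule summable_on_comparison_test) (auto simp: mon4_diff norm_triangle_ineq4)
qed (rule conv_on_pos[OF c])

text \<open>The coefficients of \<open>cnj (pser4 f (cnj w) (cnj \<omega>) (cnj z) (cnj \<zeta>))\<close>; they agree with \<open>f\<close>
  when \<open>pser4 f\<close> is real on the totally real subspace.\<close>
definition conj_coeffs :: "coeffs4 \<Rightarrow> coeffs4" where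
  "conj_coeffs f = (\<lambda>a b e d. cnj (f e d a b))"

lemma summable_mon4_conj_coeffs:
  "(\<lambda>k. norm (mon4 (conj_coeffs f) z \<zeta> w \<omega> k)) summable_on UNIV \<longleftrightarrow>
   (\<lambda>k. norm (mon4 f w \<omega> z \<zeta> k)) summable_on UNIV"
  by (rule summable_on_reindex_bij_witness[where j="\<lambda>(a,b,e,d). (e,d,a,b)" and i="\<lambda>(a,b,e,d). (e,d,a,b)"])
     (auto simp: norm_mon4 conj_coeffs_def mult_ac)

lemma conv_on_conj_coeffs:
  assumes f: "conv_on f r"
  shows "conv_on (conj_coeffs f) r"
proof (rule conv_onI)
  fix z \<zeta> w \<omega> assume "in_polydisc r z \<zeta> w \<omega>"
  then have "in_polydisc r w \<omega> z \<zeta>"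
    by (auto simp: in_polydisc_def)
  then show "(\<lambda>k. norm (mon4 (conj_coeffs f) z \<zeta> w \<omega> k)) summable_on UNIV"
    using conv_onD[OF f] summable_mon4_conj_coeffs by blast
qed (rule conv_on_pos[OF f])

lemma pser4_conj_coeffs:
  "pser4 (conj_coeffs f) z \<zeta> (cnj z) (cnj \<zeta>) = cnj (pser4 f z \<zeta> (cnj z) (cnj \<zeta>))"
proof -
  have "cnj (pser4 f z \<zeta> (cnj z) (cnj \<zeta>)) = infsum (\<lambda>k. cnj (mon4 f z \<zeta> (cnj z) (cnj \<zeta>) k)) UNIV"
    unfolding pser4_def by simp
  also have "\<dots> = pser4 (conj_coeffs f) z \<zeta> (cnj z) (cnj \<zeta>)"
    unfolding pser4_def
    by (rule infsum_reindex_bij_witness[where j="\<lambda>(a,b,e,d). (e,d,a,b)" and i="\<lambda>(a,b,e,d). (e,d,a,b)"])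
       (auto simp: mon4_def conj_coeffs_def mult_ac)
  finally show ?thesis
    by simp
qed

subsection \<open>Identity principle on the totally real subspace\<close>

lemma infinite_unit_circle: "infinite (sphere (0::complex) 1)"
proof
  assume "finite (sphere (0::complex) 1)"
  then obtain a where "sphere (0::complex) 1 = {a}"
    using connected_finite_iff_sing[OF connected_sphere[of "0::complex" 1]] by auto
  moreover have "1 \<in> sphere (0::complex) 1" "-1 \<in> sphere (0::complex) 1"
    by auto
  ultimately show False
    by auto
qed

lemma polyfun_eq_0_on_unit_circle:
  fixes c :: "nat \<Rightarrow> complex"
  assumes "\<And>\<beta>. norm \<beta> = 1 \<Longrightarrow> (\<Sum>i\<le>n. c i * \<beta>^i) = 0" and "i \<le> n"
  shows "c i = 0"
proof -
  have "sphere 0 1 \<subseteq> {\<beta>. (\<Sum>i\<le>n. c i * \<beta>^i) = 0}"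
    using assms(1) by auto
  then have "infinite {\<beta>. (\<Sum>i\<le>n. c i * \<beta>^i) = 0}"
    using infinite_unit_circle finite_subset by blast
  then show ?thesis
    using polyfun_finite_roots[of c n] assms(2) by auto
qed

lemma powser_coeffs_eq_0_if_vanishes_on_reals:
  fixes c :: "nat \<Rightarrow> complex"
  assumes \<rho>: "0 < \<rho>" and sums: "\<And>x. norm x < \<rho> \<Longrightarrow> (\<lambda>n. c n * x^n) sums f x"
    and van: "\<And>t. \<bar>t\<bar> < \<rho> \<Longrightarrow> f (of_real t) = 0"
  shows "c n = 0"
proof (rule ccontr)
  assume nz: "c n \<noteq> 0"
  have f0: "f 0 = 0"
    using van[of 0] \<rho> by simp
  show False
  proof (cases "n = 0")
    case True
    then show False
      using sums[of 0] \<rho> f0 nz by simp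
  next
    case False
    obtain s where s: "0 < s" "\<And>x. x \<in> cball 0 s - {0} \<Longrightarrow> f x \<noteq> 0"
      using powser_0_nonzero[of \<rho> 0 c f n] \<rho> sums f0 nz False by auto
    define t where "t = min s (\<rho>/2)"
    have "f (of_real t) \<noteq> 0"
      using s \<rho> by (intro s(2)) (auto simp: t_def)
    moreover have "f (of_real t) = 0"
      using s \<rho> by (intro van) (auto simp: t_def)
    ultimately show False
      by simp
  qed
qed

lemma sums_homogeneous_parts:
  fixes K :: "nat \<Rightarrow> nat \<Rightarrow> complex"
  assumes sm: "(\<lambda>(a,e). norm (K a e) * \<rho>^(a+e)) summable_on UNIV"
    and u: "norm u = 1" and x: "norm x < \<rho>"
  shows "(\<lambda>N. (\<Sum>i\<le>N. K i (N-i) * u^i * cnj u^(N-i)) * x^N) sums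
    infsum (\<lambda>(a,e). K a e * x^(a+e) * u^a * cnj u^e) UNIV"
proof -
  let ?\<psi> = "\<lambda>(a,e). K a e * x^(a+e) * u^a * cnj u^e"
  have "(\<lambda>k. norm (?\<psi> k)) summable_on UNIV"
  proof (rule summable_on_comparison_test[OF sm])
    fix k :: "nat \<times> nat"
    obtain a e where k: "k = (a,e)"
      by (cases k)
    have "norm (K a e) * norm x ^ (a+e) \<le> norm (K a e) * \<rho>^(a+e)"
      using x by (intro mult_left_mono power_mono) auto
    then show "norm (?\<psi> k) \<le> (\<lambda>(a,e). norm (K a e) * \<rho>^(a+e)) k"
      using u by (simp add: k norm_mult norm_power)
  qed auto
  then have "(?\<psi> has_sum infsum ?\<psi> UNIV) UNIV"
    using abs_summable_summable has_sum_infsum by blast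
  also have "?this \<longleftrightarrow> ((\<lambda>(N,i). ?\<psi> (i, N-i)) has_sum infsum ?\<psi> UNIV) (Sigma UNIV (\<lambda>N. {..N}))"
    by (rule has_sum_reindex_bij_witness[where j="\<lambda>(a,e). (a+e, a)" and i="\<lambda>(N,i). (i, N-i)"]) auto
  finally have "((\<lambda>N. \<Sum>i\<le>N. ?\<psi> (i, N-i)) has_sum infsum ?\<psi> UNIV) UNIV"
    by (rule has_sum_SigmaD) (auto intro!: has_sum_finiteI)
  moreover have "(\<Sum>i\<le>N. ?\<psi> (i, N-i)) = (\<Sum>i\<le>N. K i (N-i) * u^i * cnj u^(N-i)) * x^N" for N
    unfolding sum_distrib_right by (intro sum.cong) (auto simp: mult_ac)
  ultimately show ?thesis
    using has_sum_imp_sums by simp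
qed

text \<open>Along each real line \<open>z = t u\<close>, \<open>\<bar>u\<bar> = 1\<close>, the homogeneous parts form a power series in
  \<open>t\<close>, and the part of degree \<open>N\<close> is \<open>u\<^sup>-\<^sup>N\<close> times a polynomial in \<open>u\<^sup>2\<close>.\<close>
lemma totally_real_identity2:
  fixes K :: "nat \<Rightarrow> nat \<Rightarrow> complex"
  assumes \<rho>: "0 < \<rho>"
    and sm: "(\<lambda>(a,e). norm (K a e) * \<rho>^(a+e)) summable_on UNIV"
    and van: "\<And>z. norm z < \<rho> \<Longrightarrow> infsum (\<lambda>(a,e). K a e * z^a * cnj z^e) UNIV = 0"
  shows "K a e = 0"
proof -
  have homogeneous_0: "(\<Sum>i\<le>N. K i (N-i) * u^i * cnj u^(N-i)) = 0" if u: "norm u = 1" for u N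
  proof (rule powser_coeffs_eq_0_if_vanishes_on_reals[OF \<rho> sums_homogeneous_parts[OF sm u]])
    fix t :: real
    assume t: "\<bar>t\<bar> < \<rho>"
    have "(\<lambda>(a,e). K a e * of_real t^(a+e) * u^a * cnj u^e) =
        (\<lambda>(a,e). K a e * (of_real t * u)^a * cnj (of_real t * u)^e)"
      by (auto simp: power_mult_distrib power_add mult_ac)
    then show "infsum (\<lambda>(a,e). K a e * of_real t^(a+e) * u^a * cnj u^e) UNIV = 0"
      using van[of "of_real t * u"] u t by (simp add: norm_mult)
  qed
  have "(\<Sum>i\<le>N. K i (N-i) * \<beta>^i) = 0" if \<beta>: "norm \<beta> = 1" for \<beta> N
  proof -
    define u where "u = csqrt \<beta>"
    have u: "norm u = 1" "u^2 = \<beta>" "u * cnj u = 1"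
      using \<beta> complex_norm_square[of "csqrt \<beta>"] by (auto simp: u_def)
    have "K i (N-i) * u^i * cnj u^(N-i) * u^N = K i (N-i) * \<beta>^i" if "i \<le> N" for i
    proof -
      have "u^N = u^i * u^(N-i)"
        using that by (simp flip: power_add)
      then have "K i (N-i) * u^i * cnj u^(N-i) * u^N = K i (N-i) * (u^2)^i * (u * cnj u)^(N-i)"
        by (simp add: power_mult_distrib power2_eq_square mult_ac)
      then show ?thesis
        using u by simp
    qed
    then have "(\<Sum>i\<le>N. K i (N-i) * u^i * cnj u^(N-i)) * u^N = (\<Sum>i\<le>N. K i (N-i) * \<beta>^i)"
      unfolding sum_distrib_right by (intro sum.cong) auto
    then show ?thesis
      using homogeneous_0[OF u(1)] by simp
  qed
  then show ?thesis
    using polyfun_eq_0_on_unit_circle[where c="\<lambda>i. K i (a+e-i)" and n="a+e" and i=a] by simp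
qed

lemma abs_summable_regroup:
  fixes \<phi> :: "idx4 \<Rightarrow> 'a::banach"
  assumes "(\<lambda>k. norm (\<phi> k)) summable_on UNIV"
  shows "(\<lambda>(b,d). norm (\<phi> (a,b,e,d))) summable_on UNIV"
    and "((\<lambda>(a,e). infsum (\<lambda>(b,d). \<phi> (a,b,e,d)) UNIV) has_sum infsum \<phi> UNIV) UNIV"
proof -
  let ?g = "\<lambda>(x,y). (fst x, fst y, snd x, snd y) :: idx4"
  have bij: "bij_betw ?g UNIV UNIV"
    by (rule bij_betwI[where g="\<lambda>(a,b,e,d). ((a,e),(b,d))"]) auto
  have "(\<lambda>k. norm (\<phi> (?g k))) summable_on Sigma UNIV (\<lambda>_. UNIV)"
    using summable_on_reindex_bij_betw[OF bij, of "\<lambda>k. norm (\<phi> k)"] assms by simp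
  then have inner: "(\<lambda>y. norm (\<phi> (?g (x,y)))) summable_on UNIV" for x
    using Infinite_Sum.abs_summable_on_Sigma_iff[of "\<lambda>k. \<phi> (?g k)" UNIV "\<lambda>_. UNIV"] by blast
  then show "(\<lambda>(b,d). norm (\<phi> (a,b,e,d))) summable_on UNIV"
    using inner[of "(a,e)"] by (simp add: case_prod_unfold)
  have "(\<phi> has_sum infsum \<phi> UNIV) UNIV"
    using assms abs_summable_summable has_sum_infsum by blast
  then have "((\<lambda>k. \<phi> (?g k)) has_sum infsum \<phi> UNIV) (Sigma UNIV (\<lambda>_. UNIV))"
    using has_sum_reindex_bij_betw[OF bij, of \<phi>] by simp
  moreover have "((\<lambda>y. \<phi> (?g (x,y))) has_sum infsum (\<lambda>y. \<phi> (?g (x,y))) UNIV) UNIV" for x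
    using abs_summable_summable[OF inner] by (rule has_sum_infsum)
  ultimately have "((\<lambda>x. infsum (\<lambda>y. \<phi> (?g (x,y))) UNIV) has_sum infsum \<phi> UNIV) UNIV"
    by (rule has_sum_SigmaD)
  then show "((\<lambda>(a,e). infsum (\<lambda>(b,d). \<phi> (a,b,e,d)) UNIV) has_sum infsum \<phi> UNIV) UNIV"
    by (simp add: case_prod_unfold)
qed

definition zzbar_coeff :: "coeffs4 \<Rightarrow> complex \<Rightarrow> nat \<Rightarrow> nat \<Rightarrow> complex" where
  "zzbar_coeff c \<zeta> a e = infsum (\<lambda>(b,d). c a b e d * \<zeta>^b * cnj \<zeta>^d) UNIV"

lemma summable_weighted_coeffs:
  assumes cv: "conv_on c r" and \<rho>: "0 < \<rho>" "\<rho> < r"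
  shows "(\<lambda>(b,d). norm (c a b e d) * \<rho>^(b+d)) summable_on UNIV"
proof -
  let ?\<phi> = "\<lambda>k. norm (mon4 c (of_real \<rho>) (of_real \<rho>) (of_real \<rho>) (of_real \<rho>) k)"
  have "(\<lambda>k. norm (?\<phi> k)) summable_on UNIV"
    using conv_onD[OF cv, of "of_real \<rho>" "of_real \<rho>" "of_real \<rho>" "of_real \<rho>"] \<rho>
    by (simp add: in_polydisc_def)
  from abs_summable_regroup(1)[OF this, of a e]
  have "(\<lambda>y. \<rho>^(a+e) * (\<lambda>(b,d). norm (c a b e d) * \<rho>^(b+d)) y) summable_on UNIV"
    using \<rho> by (simp add: case_prod_unfold norm_mon4 power_add mult_ac)
  moreover have "\<rho>^(a+e) \<noteq> 0"
    using \<rho> by simp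
  ultimately show ?thesis
    using summable_on_cmult_right' by blast
qed

lemma summable_weighted_zzbar_coeff:
  assumes cv: "conv_on c r" and \<rho>: "0 < \<rho>" "\<rho> < r" and \<zeta>: "norm \<zeta> < \<rho>"
  shows "(\<lambda>(a,e). norm (zzbar_coeff c \<zeta> a e) * \<rho>^(a+e)) summable_on UNIV"
proof -
  let ?\<phi> = "\<lambda>k. norm (mon4 c (of_real \<rho>) (of_real (norm \<zeta>)) (of_real \<rho>) (of_real (norm \<zeta>)) k)"
  have "(\<lambda>k. norm (?\<phi> k)) summable_on UNIV"
    using conv_onD[OF cv, of "of_real \<rho>" "of_real (norm \<zeta>)" "of_real \<rho>" "of_real (norm \<zeta>)"] \<rho> \<zeta>
    by (simp add: in_polydisc_def)
  note R = abs_summable_regroup[OF this]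
  show ?thesis
  proof (rule summable_on_comparison_test[OF has_sum_imp_summable[OF R(2)]])
    fix x :: "nat \<times> nat"
    obtain a e where x: "x = (a,e)"
      by (cases x)
    let ?t = "\<lambda>(b,d). c a b e d * \<zeta>^b * cnj \<zeta>^d"
    have eq: "(\<lambda>(b,d). ?\<phi> (a,b,e,d)) = (\<lambda>y. \<rho>^(a+e) * norm (?t y))"
      using \<rho> by (auto simp: norm_mon4 norm_mult norm_power power_add mult_ac)
    have "(\<lambda>y. \<rho>^(a+e) * norm (?t y)) summable_on UNIV"
      using R(1)[of a e] by (simp add: eq)
    moreover have "\<rho>^(a+e) \<noteq> 0"
      using \<rho> by simp
    ultimately have "(\<lambda>y. norm (?t y)) summable_on UNIV"
      using summable_on_cmult_right' by blast
    then have "norm (zzbar_coeff c \<zeta> a e) * \<rho>^(a+e) \<le> infsum (\<lambda>y. norm (?t y)) UNIV * \<rho>^(a+e)"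
      unfolding zzbar_coeff_def using \<rho> by (intro mult_right_mono norm_infsum_bound) auto
    also have "\<dots> = infsum (\<lambda>(b,d). ?\<phi> (a,b,e,d)) UNIV"
      unfolding eq by (simp add: infsum_cmult_right' mult_ac)
    finally show "(\<lambda>(a,e). norm (zzbar_coeff c \<zeta> a e) * \<rho>^(a+e)) x \<le>
        (\<lambda>(a,e). infsum (\<lambda>(b,d). ?\<phi> (a,b,e,d)) UNIV) x"
      by (simp add: x)
  qed (use \<rho> in auto)
qed

lemma pser4_eq_zzbar_series:
  assumes cv: "conv_on c r" and z: "norm z < r" "norm \<zeta> < r"
  shows "pser4 c z \<zeta> (cnj z) (cnj \<zeta>) = infsum (\<lambda>(a,e). zzbar_coeff c \<zeta> a e * z^a * cnj z^e) UNIV"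
proof -
  let ?\<phi> = "mon4 c z \<zeta> (cnj z) (cnj \<zeta>)"
  have sm: "(\<lambda>k. norm (?\<phi> k)) summable_on UNIV"
    using conv_onD[OF cv] z by (simp add: in_polydisc_def)
  have eq: "infsum (\<lambda>(b,d). ?\<phi> (a,b,e,d)) UNIV = zzbar_coeff c \<zeta> a e * z^a * cnj z^e" for a e
  proof -
    have "(\<lambda>(b,d). ?\<phi> (a,b,e,d)) = (\<lambda>y. (\<lambda>(b,d). c a b e d * \<zeta>^b * cnj \<zeta>^d) y * (z^a * cnj z^e))"
      by (auto simp: mon4_def mult_ac)
    then show ?thesis
      by (simp add: zzbar_coeff_def infsum_cmult_left' mult.assoc)
  qed
  from abs_summable_regroup(2)[OF sm]
  have "((\<lambda>(a,e). zzbar_coeff c \<zeta> a e * z^a * cnj z^e) has_sum pser4 c z \<zeta> (cnj z) (cnj \<zeta>)) UNIV"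
    by (simp only: eq pser4_def)
  then show ?thesis
    by (simp add: infsumI)
qed

lemma totally_real_identity4:
  assumes cv: "conv_on c r" and \<delta>: "0 < \<delta>"
    and van: "\<And>z \<zeta>. norm z < \<delta> \<Longrightarrow> norm \<zeta> < \<delta> \<Longrightarrow> pser4 c z \<zeta> (cnj z) (cnj \<zeta>) = 0"
  shows "c a b e d = 0"
proof -
  define \<rho> where "\<rho> = min \<delta> r / 2"
  have \<rho>: "0 < \<rho>" "\<rho> < \<delta>" "\<rho> < r"
    using \<delta> conv_on_pos[OF cv] by (auto simp: \<rho>_def)
  have slices_0: "zzbar_coeff c \<zeta> a e = 0" if \<zeta>: "norm \<zeta> < \<rho>" for \<zeta> a e
  proof (rule totally_real_identity2[OF \<rho>(1) summable_weighted_zzbar_coeff[OF cv \<rho>(1,3) \<zeta>]])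
    fix z :: complex
    assume "norm z < \<rho>"
    then show "infsum (\<lambda>(a,e). zzbar_coeff c \<zeta> a e * z^a * cnj z^e) UNIV = 0"
      using van[of z \<zeta>] pser4_eq_zzbar_series[OF cv, of z \<zeta>] \<zeta> \<rho> by simp
  qed
  show ?thesis
    by (rule totally_real_identity2[OF \<rho>(1) summable_weighted_coeffs[OF cv \<rho>(1,3)]])
      (use slices_0 in \<open>simp add: zzbar_coeff_def\<close>)
qed

lemma conj_coeffs_eq_if_real:
  fixes F :: "complex \<Rightarrow> complex \<Rightarrow> real"
  assumes f: "conv_on f r"
    and F: "\<And>z \<zeta>. norm z < r \<Longrightarrow> norm \<zeta> < r \<Longrightarrow> complex_of_real (F z \<zeta>) = pser4 f z \<zeta> (cnj z) (cnj \<zeta>)"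
  shows "f a b e d = cnj (f e d a b)"
proof -
  have "(f - conj_coeffs f) a b e d = 0"
  proof (rule totally_real_identity4[OF conv_on_diff[OF f conv_on_conj_coeffs[OF f]] conv_on_pos[OF f]])
    fix z \<zeta> :: complex
    assume z: "norm z < r" "norm \<zeta> < r"
    then have "pser4 (conj_coeffs f) z \<zeta> (cnj z) (cnj \<zeta>) = pser4 f z \<zeta> (cnj z) (cnj \<zeta>)"
      using pser4_conj_coeffs[of f z \<zeta>] F[OF z, symmetric] by simp
    then show "pser4 (f - conj_coeffs f) z \<zeta> (cnj z) (cnj \<zeta>) = 0"
      using pser4_diff[OF f conv_on_conj_coeffs[OF f]] z by (simp add: in_polydisc_def)
  qed
  then show ?thesis
    by (simp add: conj_coeffs_def)
qed

subsection \<open>Coefficients of the Levi determinant\<close>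

definition levi_coeffs :: "coeffs4 \<Rightarrow> coeffs4" where
  "levi_coeffs f = cauchy4 (diffs3 (diffs1 f)) (diffs4 (diffs2 f)) - cauchy4 (diffs3 (diffs2 f)) (diffs4 (diffs1 f))"

lemma conv_on_levi_coeffs: "conv_on f r \<Longrightarrow> conv_on (levi_coeffs f) r"
  unfolding levi_coeffs_def
  by (intro conv_on_diff conv_on_cauchy4 conv_on_diffs1 conv_on_diffs2 conv_on_diffs3 conv_on_diffs4)

lemma pser4_levi_coeffs:
  assumes f: "conv_on f r" and p: "in_polydisc r z \<zeta> w \<omega>"
  shows "pser4 (levi_coeffs f) z \<zeta> w \<omega> =
      pser4 (diffs3 (diffs1 f)) z \<zeta> w \<omega> * pser4 (diffs4 (diffs2 f)) z \<zeta> w \<omega>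
    - pser4 (diffs3 (diffs2 f)) z \<zeta> w \<omega> * pser4 (diffs4 (diffs1 f)) z \<zeta> w \<omega>"
proof -
  have c: "conv_on (diffs3 (diffs1 f)) r" "conv_on (diffs4 (diffs2 f)) r"
    "conv_on (diffs3 (diffs2 f)) r" "conv_on (diffs4 (diffs1 f)) r"
    using f by (auto intro!: conv_on_diffs1 conv_on_diffs2 conv_on_diffs3 conv_on_diffs4)
  show ?thesis
    unfolding levi_coeffs_def
    by (simp add: pser4_diff[OF conv_on_cauchy4[OF c(1,2)] conv_on_cauchy4[OF c(3,4)] p]
        pser4_cauchy4[OF c(1,2) p] pser4_cauchy4[OF c(3,4) p])
qed

lemma levi_coeffs_eq_0:
  assumes f: "conv_on f r" and \<delta>: "0 < \<delta>"
    and levi: "\<And>z \<zeta>. norm z < \<delta> \<Longrightarrow> norm \<zeta> < \<delta> \<Longrightarrow>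
      d13 (pser4 f) z \<zeta> * d24 (pser4 f) z \<zeta> - d23 (pser4 f) z \<zeta> * d14 (pser4 f) z \<zeta> = 0"
  shows "levi_coeffs f a b e d = 0"
proof (rule totally_real_identity4[OF conv_on_levi_coeffs[OF f]])
  show "0 < min \<delta> r"
    using \<delta> conv_on_pos[OF f] by simp
  fix z \<zeta> :: complex
  assume "norm z < min \<delta> r" "norm \<zeta> < min \<delta> r"
  then show "pser4 (levi_coeffs f) z \<zeta> (cnj z) (cnj \<zeta>) = 0"
    using levi[of z \<zeta>] pser4_levi_coeffs[OF f, of z \<zeta> "cnj z" "cnj \<zeta>"]
      d13_pser4[OF f] d24_pser4[OF f] d23_pser4[OF f] d14_pser4[OF f]
    by (simp add: in_polydisc_def)
qed

lemma has_sum_geometric: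
  fixes x :: "'a::{real_normed_field,banach}"
  assumes "norm x < 1"
  shows "((\<lambda>k. x^k) has_sum (1 / (1 - x))) UNIV"
  using assms by (intro norm_summable_imp_has_sum) (auto simp: norm_power summable_geometric geometric_sums)

lemma has_field_derivative_divide':
  fixes f g :: "complex \<Rightarrow> complex"
  assumes "(f has_field_derivative D) (at x)" "(g has_field_derivative E) (at x)" "g x \<noteq> 0"
  shows "((\<lambda>x. f x / g x) has_field_derivative (D * g x - f x * E) / (g x)^2) (at x)"
  using DERIV_divide[OF assms] by (simp add: power2_eq_square)

subsection \<open>The model hypersurface\<close>

text \<open>\<open>model_coeffs\<close> are the coefficients of \<open>model_polar\<close>, the polarization of \<open>mfun\<close>, expanded
  by the geometric series in \<open>\<zeta> \<omega>\<close>.\<close>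
definition model_coeffs :: coeffs4 where
  "model_coeffs a b e d =
    (if a = 1 \<and> e = 1 \<and> d = b then 1
     else if a = 2 \<and> e = 0 \<and> d = Suc b then 1/2
     else if a = 0 \<and> e = 2 \<and> b = Suc d then 1/2
     else 0)"

definition model_polar :: "complex \<Rightarrow> complex \<Rightarrow> complex \<Rightarrow> complex \<Rightarrow> complex" where
  "model_polar z \<zeta> w \<omega> = (z*w + z^2*\<omega>/2 + w^2*\<zeta>/2) / (1 - \<zeta>*\<omega>)"

lemma mfun_eq_model_polar: "mfun z \<zeta> = model_polar z \<zeta> (cnj z) (cnj \<zeta>)"
  by (simp add: mfun_def model_polar_def)

lemma has_sum_on_model_support:
  fixes \<phi> :: "idx4 \<Rightarrow> 'a::real_normed_vector"
  assumes support: "\<And>a b e d. \<phi> (a,b,e,d) \<noteq> 0 \<Longrightarrow>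
      (a = 1 \<and> e = 1 \<and> d = b) \<or> (a = 2 \<and> e = 0 \<and> d = Suc b) \<or> (a = 0 \<and> e = 2 \<and> b = Suc d)"
    and h1: "((\<lambda>k. \<phi> (1,k,1,k)) has_sum s1) UNIV"
    and h2: "((\<lambda>k. \<phi> (2,k,0,Suc k)) has_sum s2) UNIV"
    and h3: "((\<lambda>k. \<phi> (0,Suc k,2,k)) has_sum s3) UNIV"
  shows "(\<phi> has_sum (s1 + s2 + s3)) UNIV"
proof -
  let ?g1 = "\<lambda>k. (1,k,1,k) :: idx4" and ?g2 = "\<lambda>k. (2,k,0,Suc k) :: idx4"
    and ?g3 = "\<lambda>k. (0,Suc k,2,k) :: idx4"
  have "(\<phi> has_sum s1) (range ?g1)" "(\<phi> has_sum s2) (range ?g2)" "(\<phi> has_sum s3) (range ?g3)"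
    using has_sum_reindex[of ?g1 UNIV \<phi>] has_sum_reindex[of ?g2 UNIV \<phi>] has_sum_reindex[of ?g3 UNIV \<phi>]
      h1 h2 h3 by (simp_all add: inj_def o_def)
  then have "(\<phi> has_sum (s1 + s2 + s3)) (range ?g1 \<union> range ?g2 \<union> range ?g3)"
    by (intro has_sum_Un_disjoint) auto
  moreover have "\<phi> x = 0" if "x \<notin> range ?g1 \<union> range ?g2 \<union> range ?g3" for x
    using that support by (cases x) fastforce
  ultimately show ?thesis
    by (subst has_sum_cong_neutral[where T="range ?g1 \<union> range ?g2 \<union> range ?g3" and g=\<phi>]) auto
qed

lemma
  assumes "norm \<zeta> * norm \<omega> < 1"
  shows has_sum_model_coeffs: "(mon4 model_coeffs z \<zeta> w \<omega> has_sum model_polar z \<zeta> w \<omega>) UNIV"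
    and summable_model_coeffs: "(\<lambda>k. norm (mon4 model_coeffs z \<zeta> w \<omega> k)) summable_on UNIV"
proof -
  have g: "((\<lambda>k. (\<zeta>*\<omega>)^k) has_sum (1 / (1 - \<zeta>*\<omega>))) UNIV"
    using assms by (intro has_sum_geometric) (simp add: norm_mult)
  let ?q = "1 / (1 - \<zeta>*\<omega>)"
  have "(mon4 model_coeffs z \<zeta> w \<omega> has_sum (z*w * ?q + z^2*\<omega>/2 * ?q + w^2*\<zeta>/2 * ?q)) UNIV"
  proof (rule has_sum_on_model_support)
    show "((\<lambda>k. mon4 model_coeffs z \<zeta> w \<omega> (1,k,1,k)) has_sum (z*w * ?q)) UNIV"
      using has_sum_cmult_right[OF g, of "z*w"] by (simp add: mon4_def model_coeffs_def power_mult_distrib mult_ac)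
    show "((\<lambda>k. mon4 model_coeffs z \<zeta> w \<omega> (2,k,0,Suc k)) has_sum (z^2*\<omega>/2 * ?q)) UNIV"
      using has_sum_cmult_right[OF g, of "z^2*\<omega>/2"] by (simp add: mon4_def model_coeffs_def power_mult_distrib mult_ac)
    show "((\<lambda>k. mon4 model_coeffs z \<zeta> w \<omega> (0,Suc k,2,k)) has_sum (w^2*\<zeta>/2 * ?q)) UNIV"
      using has_sum_cmult_right[OF g, of "w^2*\<zeta>/2"] by (simp add: mon4_def model_coeffs_def power_mult_distrib mult_ac)
  qed (auto simp: mon4_def model_coeffs_def split: if_splits)
  then show "(mon4 model_coeffs z \<zeta> w \<omega> has_sum model_polar z \<zeta> w \<omega>) UNIV"
    by (simp add: model_polar_def add_divide_distrib)
  have G: "((\<lambda>k. (norm \<zeta> * norm \<omega>)^k) has_sum (1 / (1 - norm \<zeta> * norm \<omega>))) UNIV"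
    using assms by (intro has_sum_geometric) simp
  let ?Q = "1 / (1 - norm \<zeta> * norm \<omega>)"
  have "((\<lambda>k. norm (mon4 model_coeffs z \<zeta> w \<omega> k)) has_sum
      (norm z * norm w * ?Q + norm z^2 * norm \<omega>/2 * ?Q + norm w^2 * norm \<zeta>/2 * ?Q)) UNIV"
  proof (rule has_sum_on_model_support)
    show "((\<lambda>k. norm (mon4 model_coeffs z \<zeta> w \<omega> (1,k,1,k))) has_sum (norm z * norm w * ?Q)) UNIV"
      using has_sum_cmult_right[OF G, of "norm z * norm w"]
      by (simp add: norm_mon4 model_coeffs_def power_mult_distrib mult_ac)
    show "((\<lambda>k. norm (mon4 model_coeffs z \<zeta> w \<omega> (2,k,0,Suc k))) has_sum (norm z^2 * norm \<omega>/2 * ?Q)) UNIV"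
      using has_sum_cmult_right[OF G, of "norm z^2 * norm \<omega>/2"]
      by (simp add: norm_mon4 model_coeffs_def power_mult_distrib mult_ac)
    show "((\<lambda>k. norm (mon4 model_coeffs z \<zeta> w \<omega> (0,Suc k,2,k))) has_sum (norm w^2 * norm \<zeta>/2 * ?Q)) UNIV"
      using has_sum_cmult_right[OF G, of "norm w^2 * norm \<zeta>/2"]
      by (simp add: norm_mon4 model_coeffs_def power_mult_distrib mult_ac)
  qed (auto simp: mon4_def model_coeffs_def split: if_splits)
  then show "(\<lambda>k. norm (mon4 model_coeffs z \<zeta> w \<omega> k)) summable_on UNIV"
    by (rule has_sum_imp_summable)
qed

lemma in_polydisc_1_norm_less: "in_polydisc 1 z \<zeta> w \<omega> \<Longrightarrow> norm \<zeta> * norm \<omega> < 1"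
  unfolding in_polydisc_def by (metis mult_strict_mono' norm_ge_zero mult_1)

lemma in_polydisc_1_denom: "in_polydisc 1 z \<zeta> w \<omega> \<Longrightarrow> 1 - \<zeta> * \<omega> \<noteq> 0"
  using in_polydisc_1_norm_less[of z \<zeta> w \<omega>] by (auto simp: norm_mult dest: arg_cong[of _ _ norm])

lemma conv_on_model_coeffs: "conv_on model_coeffs 1"
  by (rule conv_onI) (auto intro: summable_model_coeffs in_polydisc_1_norm_less)

lemma pser4_model_coeffs: "in_polydisc 1 z \<zeta> w \<omega> \<Longrightarrow> pser4 model_coeffs z \<zeta> w \<omega> = model_polar z \<zeta> w \<omega>"
  unfolding pser4_def by (intro infsumI has_sum_model_coeffs in_polydisc_1_norm_less)

context
  fixes z \<zeta> w \<omega> :: complex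
  assumes q: "1 - \<zeta> * \<omega> \<noteq> 0"
begin

lemma model_denom_ne: "\<zeta> * \<omega> \<noteq> 1" "\<omega> * \<zeta> \<noteq> 1"
  using q by (auto simp: mult.commute)

lemma model_polar_deriv1:
  "((\<lambda>t. model_polar t \<zeta> w \<omega>) has_field_derivative (w + z*\<omega>) / (1 - \<zeta>*\<omega>)) (at z)"
  unfolding model_polar_def by (rule derivative_eq_intros refl | use q in simp)+

lemma model_polar_deriv2:
  "((\<lambda>t. model_polar z t w \<omega>) has_field_derivative (w + z*\<omega>)^2 / (2 * (1 - \<zeta>*\<omega>)^2)) (at \<zeta>)"
proof -
  have "((\<lambda>t. (z*w + z^2*\<omega>/2 + w^2*t/2) / (1 - t*\<omega>)) has_field_derivative
      ((w^2/2) * (1-\<zeta>*\<omega>) - (z*w + z^2*\<omega>/2 + w^2*\<zeta>/2) * (-\<omega>)) / (1-\<zeta>*\<omega>)^2) (at \<zeta>)"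
    using q by (intro has_field_derivative_divide') (auto intro!: derivative_eq_intros simp: mult.commute)
  then show ?thesis
    unfolding model_polar_def by (rule DERIV_cong) (use q model_denom_ne in \<open>simp add: divide_simps; algebra\<close>)
qed

lemma model_polar_deriv13:
  "((\<lambda>t. (t + z*\<omega>) / (1 - \<zeta>*\<omega>)) has_field_derivative 1 / (1 - \<zeta>*\<omega>)) (at w)"
  using q by (auto intro!: derivative_eq_intros)

lemma model_polar_deriv14:
  "((\<lambda>t. (w + z*t) / (1 - \<zeta>*t)) has_field_derivative (z + \<zeta>*w) / (1 - \<zeta>*\<omega>)^2) (at \<omega>)"
proof -
  have "((\<lambda>t. (w + z*t) / (1 - \<zeta>*t)) has_field_derivative (z * (1-\<zeta>*\<omega>) - (w + z*\<omega>) * (-\<zeta>)) / (1-\<zeta>*\<omega>)^2) (at \<omega>)"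
    using q by (intro has_field_derivative_divide') (auto intro!: derivative_eq_intros)
  then show ?thesis
    by (rule DERIV_cong) (use q model_denom_ne in \<open>simp add: divide_simps; algebra\<close>)
qed

lemma model_polar_deriv23:
  "((\<lambda>t. (t + z*\<omega>)^2 / (2 * (1 - \<zeta>*\<omega>)^2)) has_field_derivative (w + z*\<omega>) / (1 - \<zeta>*\<omega>)^2) (at w)"
proof -
  have "((\<lambda>t. (t + z*\<omega>)^2 / (2 * (1 - \<zeta>*\<omega>)^2)) has_field_derivative
      (2 * (w + z*\<omega>) * (2 * (1 - \<zeta>*\<omega>)^2) - (w + z*\<omega>)^2 * 0) / (2 * (1 - \<zeta>*\<omega>)^2)^2) (at w)"
    using q by (intro has_field_derivative_divide') (auto intro!: derivative_eq_intros)
  then show ?thesis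
    by (rule DERIV_cong) (use q model_denom_ne in \<open>simp add: divide_simps; algebra\<close>)
qed

lemma model_polar_deriv24:
  "((\<lambda>t. (w + z*t)^2 / (2 * (1 - \<zeta>*t)^2)) has_field_derivative
    (w + z*\<omega>) * (z + \<zeta>*w) / (1 - \<zeta>*\<omega>)^3) (at \<omega>)"
proof -
  have "((\<lambda>t. (w + z*t)^2 / (2 * (1 - \<zeta>*t)^2)) has_field_derivative
      (2 * (w + z*\<omega>) * z * (2 * (1 - \<zeta>*\<omega>)^2) - (w + z*\<omega>)^2 * (2 * (2 * (1 - \<zeta>*\<omega>) * (-\<zeta>))))
        / (2 * (1 - \<zeta>*\<omega>)^2)^2) (at \<omega>)"
    using q by (intro has_field_derivative_divide') (auto intro!: derivative_eq_intros)
  then show ?thesis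
    by (rule DERIV_cong) (use q model_denom_ne in \<open>simp add: divide_simps; algebra\<close>)
qed

end

lemma pser4_model_diffs1:
  assumes p: "in_polydisc 1 z \<zeta> w \<omega>"
  shows "pser4 (diffs1 model_coeffs) z \<zeta> w \<omega> = (w + z*\<omega>) / (1 - \<zeta>*\<omega>)"
proof (rule pser4_diffs1_eqI[OF conv_on_model_coeffs p])
  fix t :: complex
  assume "norm t < 1"
  with p show "pser4 model_coeffs t \<zeta> w \<omega> = model_polar t \<zeta> w \<omega>"
    by (intro pser4_model_coeffs) (simp add: in_polydisc_def)
qed (rule model_polar_deriv1[OF in_polydisc_1_denom[OF p]])

lemma pser4_model_diffs2:
  assumes p: "in_polydisc 1 z \<zeta> w \<omega>"
  shows "pser4 (diffs2 model_coeffs) z \<zeta> w \<omega> = (w + z*\<omega>)^2 / (2 * (1 - \<zeta>*\<omega>)^2)"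
proof (rule pser4_diffs2_eqI[OF conv_on_model_coeffs p])
  fix t :: complex
  assume "norm t < 1"
  with p show "pser4 model_coeffs z t w \<omega> = model_polar z t w \<omega>"
    by (intro pser4_model_coeffs) (simp add: in_polydisc_def)
qed (rule model_polar_deriv2[OF in_polydisc_1_denom[OF p]])

context
  fixes z \<zeta> w \<omega> :: complex
  assumes p: "in_polydisc 1 z \<zeta> w \<omega>"
begin

lemma pser4_model_diffs31: "pser4 (diffs3 (diffs1 model_coeffs)) z \<zeta> w \<omega> = 1 / (1 - \<zeta>*\<omega>)"
proof (rule pser4_diffs3_eqI[OF conv_on_diffs1[OF conv_on_model_coeffs] p])
  fix t :: complex
  assume "norm t < 1"
  with p show "pser4 (diffs1 model_coeffs) z \<zeta> t \<omega> = (t + z*\<omega>) / (1 - \<zeta>*\<omega>)"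
    by (intro pser4_model_diffs1) (simp add: in_polydisc_def)
qed (rule model_polar_deriv13[OF in_polydisc_1_denom[OF p]])

lemma pser4_model_diffs41: "pser4 (diffs4 (diffs1 model_coeffs)) z \<zeta> w \<omega> = (z + \<zeta>*w) / (1 - \<zeta>*\<omega>)^2"
proof (rule pser4_diffs4_eqI[OF conv_on_diffs1[OF conv_on_model_coeffs] p])
  fix t :: complex
  assume "norm t < 1"
  with p show "pser4 (diffs1 model_coeffs) z \<zeta> w t = (w + z*t) / (1 - \<zeta>*t)"
    by (intro pser4_model_diffs1) (simp add: in_polydisc_def)
qed (rule model_polar_deriv14[OF in_polydisc_1_denom[OF p]])

lemma pser4_model_diffs32: "pser4 (diffs3 (diffs2 model_coeffs)) z \<zeta> w \<omega> = (w + z*\<omega>) / (1 - \<zeta>*\<omega>)^2"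
proof (rule pser4_diffs3_eqI[OF conv_on_diffs2[OF conv_on_model_coeffs] p])
  fix t :: complex
  assume "norm t < 1"
  with p show "pser4 (diffs2 model_coeffs) z \<zeta> t \<omega> = (t + z*\<omega>)^2 / (2 * (1 - \<zeta>*\<omega>)^2)"
    by (intro pser4_model_diffs2) (simp add: in_polydisc_def)
qed (rule model_polar_deriv23[OF in_polydisc_1_denom[OF p]])

lemma pser4_model_diffs42: "pser4 (diffs4 (diffs2 model_coeffs)) z \<zeta> w \<omega> = (w + z*\<omega>) * (z + \<zeta>*w) / (1 - \<zeta>*\<omega>)^3"
proof (rule pser4_diffs4_eqI[OF conv_on_diffs2[OF conv_on_model_coeffs] p])
  fix t :: complex
  assume "norm t < 1"
  with p show "pser4 (diffs2 model_coeffs) z \<zeta> w t = (w + z*t)^2 / (2 * (1 - \<zeta>*t)^2)"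
    by (intro pser4_model_diffs2) (simp add: in_polydisc_def)
qed (rule model_polar_deriv24[OF in_polydisc_1_denom[OF p]])

end

lemma levi_coeffs_model: "levi_coeffs model_coeffs a b e d = 0"
proof (rule totally_real_identity4[OF conv_on_levi_coeffs[OF conv_on_model_coeffs] zero_less_one])
  fix z \<zeta> :: complex
  assume "norm z < 1" "norm \<zeta> < 1"
  then have p: "in_polydisc 1 z \<zeta> (cnj z) (cnj \<zeta>)"
    by (simp add: in_polydisc_def)
  then show "pser4 (levi_coeffs model_coeffs) z \<zeta> (cnj z) (cnj \<zeta>) = 0"
    using in_polydisc_1_denom[OF p]
    by (simp add: pser4_levi_coeffs[OF conv_on_model_coeffs p] pser4_model_diffs31[OF p]
        pser4_model_diffs41[OF p] pser4_model_diffs32[OF p] pser4_model_diffs42[OF p] divide_simps)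
       algebra
qed

subsection \<open>Recursion for the coefficients\<close>

definition levi_term :: "coeffs4 \<Rightarrow> idx4 \<Rightarrow> idx4 \<Rightarrow> complex" where
  "levi_term f k j = (case j of (a',b',e',d') \<Rightarrow> case sub4 k j of (a'',b'',e'',d'') \<Rightarrow>
      diffs3 (diffs1 f) a' b' e' d' * diffs4 (diffs2 f) a'' b'' e'' d''
    - diffs3 (diffs2 f) a' b' e' d' * diffs4 (diffs1 f) a'' b'' e'' d'')"

lemma levi_coeffs_eq_sum: "levi_coeffs f a b e d = (\<Sum>j\<in>box4 (a,b,e,d). levi_term f (a,b,e,d) j)"
  unfolding levi_coeffs_def cauchy4_def levi_term_def
  by (simp add: sum_subtractf case_prod_unfold sub4_def)

lemma diffs_diffs_simps:
  "diffs3 (diffs1 c) a b e d = of_nat (e+1) * of_nat (a+1) * c (a+1) b (e+1) d"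
  "diffs4 (diffs2 c) a b e d = of_nat (d+1) * of_nat (b+1) * c a (b+1) e (d+1)"
  "diffs3 (diffs2 c) a b e d = of_nat (e+1) * of_nat (b+1) * c a (b+1) (e+1) d"
  "diffs4 (diffs1 c) a b e d = of_nat (d+1) * of_nat (a+1) * c (a+1) b e (d+1)"
  by (simp_all add: diffs1_def diffs2_def diffs3_def diffs4_def)

text \<open>Since \<open>f 1 0 1 0 = 1\<close> and \<open>f 0 1 1 0 = 0\<close>, the term \<open>j = 0\<close> of \<open>levi_coeffs f a b e d\<close> is
  \<open>(d+1) (b+1) f a (b+1) e (d+1)\<close>; all other terms involve coefficients of lower order.\<close>
lemma coeff_eq_if_levi_terms_eq:
  assumes levi: "levi_coeffs f a b e d = levi_coeffs g a b e d"
    and f: "f 1 0 1 0 = 1" "f 0 1 1 0 = 0" and g: "g 1 0 1 0 = 1" "g 0 1 1 0 = 0"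
    and terms: "\<And>j. j \<in> box4 (a,b,e,d) \<Longrightarrow> j \<noteq> (0,0,0,0) \<Longrightarrow>
      levi_term f (a,b,e,d) j = levi_term g (a,b,e,d) j"
  shows "f a (b+1) e (d+1) = g a (b+1) e (d+1)"
proof -
  have "(0,0,0,0) \<in> box4 (a,b,e,d)"
    by (simp add: box4_def)
  then have "levi_coeffs h a b e d = levi_term h (a,b,e,d) (0,0,0,0) +
      (\<Sum>j\<in>box4 (a,b,e,d) - {(0,0,0,0)}. levi_term h (a,b,e,d) j)" for h
    unfolding levi_coeffs_eq_sum by (simp add: sum.remove)
  moreover have "(\<Sum>j\<in>box4 (a,b,e,d) - {(0,0,0,0)}. levi_term f (a,b,e,d) j) =
      (\<Sum>j\<in>box4 (a,b,e,d) - {(0,0,0,0)}. levi_term g (a,b,e,d) j)"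
    using terms by (intro sum.cong) auto
  ultimately have "levi_term f (a,b,e,d) (0,0,0,0) = levi_term g (a,b,e,d) (0,0,0,0)"
    using levi by simp
  then have "of_nat (d+1) * of_nat (b+1) * f a (b+1) e (d+1) = of_nat (d+1) * of_nat (b+1) * g a (b+1) e (d+1)"
    using f g by (simp add: levi_term_def sub4_def diffs_diffs_simps)
  then show ?thesis
    using of_nat_neq_0[of d, where 'a=complex] of_nat_neq_0[of b, where 'a=complex] by simp
qed

text \<open>A term with \<open>j \<noteq> 0\<close> involves coefficients of level at most \<open>d\<close>, or coefficients of level
  \<open>d + 1\<close> that precede \<open>(a, e)\<close> in the order of \<open>3 (a + e) + e\<close> (the factor \<open>f 0 1 2 0 = 1/2\<close> meets
  \<open>f (a+1) _ (e-1) (d+1)\<close>), or it contains a known factor that vanishes.\<close>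
lemma levi_term_eq_model:
  assumes ae: "a + e \<le> 2"
    and base: "\<And>a' b' e'. e' \<le> 2 \<Longrightarrow> f a' b' e' 0 = model_coeffs a' b' e' 0"
    and lower: "\<And>a' b' e' k. a' + e' \<le> 2 \<Longrightarrow> k \<le> d \<Longrightarrow> f a' b' e' k = model_coeffs a' b' e' k"
    and same: "\<And>a' b' e'. a' + e' \<le> 2 \<Longrightarrow> 3 * (a' + e') + e' < 3 * (a + e) + e \<Longrightarrow>
      f a' b' e' (Suc d) = model_coeffs a' b' e' (Suc d)"
    and j: "j \<in> box4 (a,b,e,d)" "j \<noteq> (0,0,0,0)"
  shows "levi_term f (a,b,e,d) j = levi_term model_coeffs (a,b,e,d) j"
proof -
  obtain a1 b1 e1 k1 where j_eq: "j = (a1,b1,e1,k1)" and le: "a1 \<le> a" "b1 \<le> b" "e1 \<le> e" "k1 \<le> d"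
    using j(1) by (cases j) (auto simp: box4_def)
  have A: "a1 = 0 \<or> a1 = 1 \<or> a1 = 2" "e1 = 0 \<or> e1 = 1 \<or> e1 = 2"
      "a = 0 \<or> a = 1 \<or> a = 2" "e = 0 \<or> e = 1 \<or> e = 2"
    using le ae by auto
  show ?thesis
  proof (cases "k1 = 0")
    case True
    then show ?thesis
      using A le ae j(2) unfolding j_eq
      by (elim disjE) (simp_all add: levi_term_def sub4_def diffs_diffs_simps base same model_coeffs_def)
  next
    case False
    then have "Suc (d - k1) \<le> d"
      using le by linarith
    then show ?thesis
      using A le ae unfolding j_eq
      by (elim disjE) (simp_all add: levi_term_def sub4_def diffs_diffs_simps lower model_coeffs_def)
  qed
qed

lemma coeff_eq_model_Suc:
  assumes levi: "levi_coeffs f a b e d = 0"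
    and base: "\<And>a b e. e \<le> 2 \<Longrightarrow> f a b e 0 = model_coeffs a b e 0"
    and ae: "a + e \<le> 2"
    and lower: "\<And>a' b' e' k. a' + e' \<le> 2 \<Longrightarrow> k \<le> d \<Longrightarrow> f a' b' e' k = model_coeffs a' b' e' k"
    and same: "\<And>a' b' e'. a' + e' \<le> 2 \<Longrightarrow> 3 * (a' + e') + e' < 3 * (a + e) + e \<Longrightarrow>
      f a' b' e' (Suc d) = model_coeffs a' b' e' (Suc d)"
  shows "f a (b+1) e (d+1) = model_coeffs a (b+1) e (d+1)"
proof (rule coeff_eq_if_levi_terms_eq)
  show "levi_coeffs f a b e d = levi_coeffs model_coeffs a b e d"
    by (simp add: levi levi_coeffs_model)
  show "f 1 0 1 0 = 1" "f 0 1 1 0 = 0"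
    using base[where a=1 and b=0 and e=1] base[where a=0 and b=1 and e=1] by (simp_all add: model_coeffs_def)
  show "model_coeffs 1 0 1 0 = 1" "model_coeffs 0 1 1 0 = 0"
    by (simp_all add: model_coeffs_def)
  show "levi_term f (a,b,e,d) j = levi_term model_coeffs (a,b,e,d) j"
    if "j \<in> box4 (a,b,e,d)" "j \<noteq> (0,0,0,0)" for j
    by (rule levi_term_eq_model[OF ae base lower same that])
qed

lemma model_coeffs_hermitian: "model_coeffs a b e d = cnj (model_coeffs e d a b)"
  by (simp add: model_coeffs_def)

lemma low_order_coeffs_eq_model:
  assumes levi: "\<And>a b e d. levi_coeffs f a b e d = 0"
    and base: "\<And>a b e. e \<le> 2 \<Longrightarrow> f a b e 0 = model_coeffs a b e 0"
    and herm: "\<And>a b e d. f a b e d = cnj (f e d a b)"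
    and ae: "a + e \<le> 2"
  shows "f a b e d = model_coeffs a b e d"
  using ae
proof (induction d arbitrary: a b e rule: less_induct)
  case (less d)
  note lower = less.IH
  show ?case
    using less.prems
  proof (induction "3 * (a + e) + e" arbitrary: a b e rule: less_induct)
    case less
    note same = less.hyps
    consider "d = 0" | "b = 0" | b' d' where "b = b' + 1" "d = d' + 1"
      by (metis add.commute add.left_neutral not0_implies_Suc plus_1_eq_Suc)
    then show ?case
    proof cases
      case 1
      then show ?thesis
        using base less.prems by simp
    next
      case 2
      have "f a 0 e d = cnj (f e d a 0)"
        by (rule herm)
      also have "\<dots> = cnj (model_coeffs e d a 0)"
        using base less.prems by simp
      finally show ?thesis
        using 2 model_coeffs_hermitian[of a 0 e d] by simp
    next
      case 3
      have "f a (b'+1) e (d'+1) = model_coeffs a (b'+1) e (d'+1)"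
      proof (rule coeff_eq_model_Suc[OF levi base less.prems])
        show "f a'' b'' e'' k = model_coeffs a'' b'' e'' k" if "a'' + e'' \<le> 2" "k \<le> d'" for a'' b'' e'' k
          using lower that 3 by simp
        show "f a'' b'' e'' (Suc d') = model_coeffs a'' b'' e'' (Suc d')"
          if "a'' + e'' \<le> 2" "3 * (a'' + e'') + e'' < 3 * (a + e) + e" for a'' b'' e''
          using same that 3 by simp
      qed
      then show ?thesis
        using 3 by simp
    qed
  qed
qed

theorem proposition5p7:
  fixes F :: "complex \<Rightarrow> complex \<Rightarrow> real" and f :: coeffs4 and r :: real
  assumes analytic: "conv_on f r"
    and repr: "\<And>z \<zeta>. norm z < r \<Longrightarrow> norm \<zeta> < r \<Longrightarrow>
                 complex_of_real (F z \<zeta>) = pser4 f z \<zeta> (cnj z) (cnj \<zeta>)"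
    and levi_rank1: "\<exists>\<delta>>0. \<forall>z \<zeta>. norm z < \<delta> \<and> norm \<zeta> < \<delta> \<longrightarrow>
           d13 (pser4 f) z \<zeta> * d24 (pser4 f) z \<zeta> - d23 (pser4 f) z \<zeta> * d14 (pser4 f) z \<zeta> = 0
           \<and> (d13 (pser4 f) z \<zeta>, d24 (pser4 f) z \<zeta>, d23 (pser4 f) z \<zeta>, d14 (pser4 f) z \<zeta>) \<noteq> (0,0,0,0)"
    and prenormalized: "\<And>a b e. e \<le> 2 \<Longrightarrow>
           f a b e 0 = (if (a,b,e) = (1,0,1) then 1 else if (a,b,e) = (0,1,2) then 1/2 else 0)"
  shows "\<exists>g \<rho>. conv_on g \<rho> \<and> (\<forall>a b e d. a + e < 3 \<longrightarrow> g a b e d = 0) \<and>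
           (\<forall>z \<zeta>. norm z < \<rho> \<and> norm \<zeta> < \<rho> \<longrightarrow>
              complex_of_real (F z \<zeta>) - mfun z \<zeta> = pser4 g z \<zeta> (cnj z) (cnj \<zeta>))"
proof -
  obtain \<delta> where "0 < \<delta>" and "\<And>z \<zeta>. norm z < \<delta> \<Longrightarrow> norm \<zeta> < \<delta> \<Longrightarrow>
      d13 (pser4 f) z \<zeta> * d24 (pser4 f) z \<zeta> - d23 (pser4 f) z \<zeta> * d14 (pser4 f) z \<zeta> = 0"
    using levi_rank1 by blast
  then have levi: "levi_coeffs f a b e d = 0" for a b e d
    by (rule levi_coeffs_eq_0[OF analytic])
  have base: "f a b e 0 = model_coeffs a b e 0" if "e \<le> 2" for a b e
    using prenormalized[OF that] by (auto simp: model_coeffs_def)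
  have low: "f a b e d = model_coeffs a b e d" if "a + e \<le> 2" for a b e d
    using low_order_coeffs_eq_model[OF levi base conj_coeffs_eq_if_real[OF analytic repr] that] .
  define \<rho> where "\<rho> = min r 1"
  have \<rho>: "0 < \<rho>" "\<rho> \<le> r" "\<rho> \<le> 1"
    using conv_on_pos[OF analytic] by (auto simp: \<rho>_def)
  have conv: "conv_on f \<rho>" "conv_on model_coeffs \<rho>"
    using conv_on_mono[OF analytic \<rho>(1,2)] conv_on_mono[OF conv_on_model_coeffs \<rho>(1,3)] .
  show ?thesis
  proof (intro exI conjI allI impI)
    show "conv_on (f - model_coeffs) \<rho>"
      by (rule conv_on_diff[OF conv])
    show "(f - model_coeffs) a b e d = 0" if "a + e < 3" for a b e d
      using low that by simp
    fix z \<zeta> :: complex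
    assume "norm z < \<rho> \<and> norm \<zeta> < \<rho>"
    then show "complex_of_real (F z \<zeta>) - mfun z \<zeta> = pser4 (f - model_coeffs) z \<zeta> (cnj z) (cnj \<zeta>)"
      using \<rho> repr[of z \<zeta>] pser4_diff[OF conv, of z \<zeta> "cnj z" "cnj \<zeta>"]
        pser4_model_coeffs[of z \<zeta> "cnj z" "cnj \<zeta>"]
      by (simp add: mfun_eq_model_polar in_polydisc_def)
  qed
qed

end
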